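(* Let $a<b$, $c<d$, $C\in\mathbb{R}\setminus\{0\}$, $\Delta=\max\{b-a,d-c\}$, and let $N\ge2$ be an integer. Let $(p,q)$ be a pair of real sequences with $p_0=q_0$ and with $\|(p,q)\|_\gamma<\infty$ for some integer $\gamma\ge1$, where $$\|(p,q)\|_\gamma=\max\Big\{\sup_{n\ge0}\Big|\frac{(n!)^2p_n}{(\gamma|C|\Delta)^n}\Big|,\ \sup_{n\ge0}\Big|\frac{(n!)^2q_n}{(\gamma|C|\Delta)^n}\Big|\Big\}.$$ Let $k$ be the solution of the Goursat problem $\partial^2k/\partial s\partial t=Ck$ on $[a,b]\times[c,d]$ with $k(s,c)=\sum_{n\ge0}p_n(s-a)^n$ and $k(a,t)=\sum_{n\ge0}q_n(t-c)^n$. For $0\le n\le N$ set $$\hat p_n=\sum_{k=0}^{n}p_k\frac{(C(d-c))^{n-k}k!}{(n-k)!\,n!}+\sum_{k=1}^{N}q_k\frac{C^n(d-c)^{n+k}k!}{(n+k)!\,n!},\qquad \hat q_n=\sum_{k=0}^{n}q_k\frac{(C(b-a))^{n-k}k!}{(n-k)!\,n!}+\sum_{k=1}^{N}p_k\frac{C^n(b-a)^{n+k}k!}{(n+k)!\,n!},$$ and $\hat k^N(b,d)=\frac12\sum_{n=0}^N\big(\hat p_n(b-a)^n+\hat q_n(d-c)^n\big)$. Then $$|k(b,d)-\hat k^N(b,d)|\le 2\|(p,q)\|_\gamma\,I_0(2\sqrt{\gamma|C|}\Delta)\,I_0(2\sqrt{(\gamma+1)|C|}\Delta)\,\frac{(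|C|\Delta^2)^{N+1}(\gamma+1)^{N+1}}{[(N+1)!]^2}.$$
   Context: The solution of the Goursat problem is the continuous function $k$ on $[a,b]\times[c,d]$ with $k(s,t)=k(s,c)+k(a,t)-k(a,c)+C\int_a^s\int_c^t k(r,w)\,dw\,dr$. $I_0$ is the zero-order modified Bessel function of the first kind, $I_0(2z)=\sum_{k\ge0}z^{2k}/(k!)^2$. The quantities $\hat p,\hat q$ are the order-$N$ truncations of the boundary coefficient map applied to the order-$N$ truncated input coefficients. *)

theory Defs
  imports "HOL-Analysis.Analysis"
begin

definition bessel_I0 :: "real \<Rightarrow> real" where
  "bessel_I0 x = (\<Sum>j. (x / 2) ^ (2 * j) / (fact j) ^ 2)"

definition gamma_norm :: "(nat \<Rightarrow> real) \<Rightarrow> (nat \<Rightarrow> real) \<Rightarrow> nat \<Rightarrow> real \<Rightarrow> real \<Rightarrow> real" where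
  "gamma_norm p q \<gamma> C \<Delta> =
     max (SUP n. \<bar>(fact n) ^ 2 * p n / (real \<gamma> * \<bar>C\<bar> * \<Delta>) ^ n\<bar>)
         (SUP n. \<bar>(fact n) ^ 2 * q n / (real \<gamma> * \<bar>C\<bar> * \<Delta>) ^ n\<bar>)"

definition goursat_solution ::
  "real \<Rightarrow> real \<Rightarrow> real \<Rightarrow> real \<Rightarrow> real \<Rightarrow> (real \<Rightarrow> real \<Rightarrow> real) \<Rightarrow> bool" where
  "goursat_solution a b c d C k \<longleftrightarrow>
     continuous_on ({a..b} \<times> {c..d}) (\<lambda>(s, t). k s t) \<and>
     (\<forall>s\<in>{a..b}. \<forall>t\<in>{c..d}.
        k s t = k s c + k a t - k a c
                + C * integral {a..s} (\<lambda>r. integral {c..t} (\<lambda>w. k r w)))"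

definition p_hat :: "(nat \<Rightarrow> real) \<Rightarrow> (nat \<Rightarrow> real) \<Rightarrow> real \<Rightarrow> real \<Rightarrow> real \<Rightarrow> nat \<Rightarrow> nat \<Rightarrow> real" where
  "p_hat p q C a b N n =
     (\<Sum>j=0..n. p j * (C * (b - a)) ^ (n - j) * fact j / (fact (n - j) * fact n))
     + (\<Sum>j=1..N. q j * C ^ n * (b - a) ^ (n + j) * fact j / (fact (n + j) * fact n))"

text \<open>With this definition, \<open>p\<hat>_n = p_hat p q C c d N n\<close> (uses d - c) and
  \<open>q\<hat>_n = p_hat q p C a b N n\<close> (uses b - a).\<close>

definition k_hat :: "(nat \<Rightarrow> real) \<Rightarrow> (nat \<Rightarrow> real) \<Rightarrow> real \<Rightarrow> real \<Rightarrow> real \<Rightarrow> real \<Rightarrow> real \<Rightarrow> nat \<Rightarrow> real" where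
  "k_hat p q C a b c d N =
     (1/2) * (\<Sum>n=0..N. p_hat p q C c d N n * (b - a) ^ n + p_hat q p C a b N n * (d - c) ^ n)"

end

theory Submission
  imports Defs
begin

(* Writing x = s - a and y = t - c, the solution is the double power series
   sum of c_mn x^m y^n whose coefficients are fixed by the boundary data and by
   c_(m+1)(n+1) = C c_mn / ((m+1)(n+1)).  With M the weighted norm of (p, q), the
   coefficient bounds give |c_mn x^m y^n| <= M (|C| Delta^2)^L gamma^(L-i) / (L! (L-i)! i!)
   for L = max m n and i = min m n, so by the binomial theorem the terms on the shell
   max m n = L sum to at most 2 M ((gamma+1) |C| Delta^2)^L / (L!)^2.  Hence the series
   converges uniformly, may be integrated termwise and solves the integral equation,
   and a Picard iteration shows that continuous solutions are unique.  Both halves of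
   k_hat are sums of the series over finite index sets containing the square {0..N}^2,
   so their errors are bounded by the shells beyond N, whose sum is at most
   ((gamma+1) |C| Delta^2)^(N+1) / ((N+1)!)^2 * I0(2 sqrt((gamma+1) |C|) Delta). *)

section \<open>Shell sums of double series\<close>

definition shell_sum :: "(nat \<Rightarrow> nat \<Rightarrow> 'a::comm_monoid_add) \<Rightarrow> nat \<Rightarrow> 'a" where
  "shell_sum f L = (\<Sum>i\<le>L. f L i) + (\<Sum>j<L. f j L)"

lemma sum_square_eq_sum_shell_sum: "(\<Sum>m<L. \<Sum>n<L. f m n) = (\<Sum>K<L. shell_sum f K)"
proof (induction L)
  case (Suc L)
  have "(\<Sum>m<Suc L. \<Sum>n<Suc L. f m n) = (\<Sum>m<L. \<Sum>n<L. f m n) + (\<Sum>m<L. f m L) + (\<Sum>n\<le>L. f L n)"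
    by (simp add: sum.distrib lessThan_Suc_atMost[symmetric] ac_simps)
  then show ?case using Suc by (simp add: shell_sum_def ac_simps)
qed simp

lemma shell_sum_add: "shell_sum (\<lambda>m n. f m n + g m n) K = shell_sum f K + shell_sum g K"
  unfolding shell_sum_def by (simp add: sum.distrib ac_simps)

lemma abs_shell_sum_le:
  fixes f :: "nat \<Rightarrow> nat \<Rightarrow> 'a::ordered_ab_group_add_abs"
  shows "\<bar>shell_sum f K\<bar> \<le> shell_sum (\<lambda>m n. \<bar>f m n\<bar>) K"
  unfolding shell_sum_def by (rule order_trans[OF abs_triangle_ineq add_mono[OF sum_abs sum_abs]])

lemma shell_sum_restrict_sums:
  fixes f :: "nat \<Rightarrow> nat \<Rightarrow> real"
  assumes "finite S"
  shows "(\<lambda>K. shell_sum (\<lambda>m n. if (m, n) \<in> S then f m n else 0) K) sums (\<Sum>(m, n)\<in>S. f m n)"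
proof -
  define g where "g m n = (if (m, n) \<in> S then f m n else 0)" for m n
  obtain R where "fst ` S \<union> snd ` S \<subseteq> {..<R}"
    using finite_nat_bounded \<open>finite S\<close> by (metis finite_Un finite_imageI)
  then have S_sub: "S \<subseteq> {..<R} \<times> {..<R}" by force
  have g_outside: "shell_sum g K = 0" if "K \<notin> {..<R}" for K
  proof -
    have "(K, i) \<notin> S" "(i, K) \<notin> S" for i
      using that S_sub by auto
    then show ?thesis by (simp add: shell_sum_def g_def)
  qed
  have "(\<Sum>(m, n)\<in>S. f m n) = (\<Sum>(m, n)\<in>{..<R} \<times> {..<R}. g m n)"
    using S_sub by (intro sum.mono_neutral_cong_left) (auto simp: g_def)
  also have "\<dots> = (\<Sum>K<R. shell_sum g K)"
    by (simp add: sum.cartesian_product[symmetric] sum_square_eq_sum_shell_sum)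
  finally have sum_S: "(\<Sum>(m, n)\<in>S. f m n) = (\<Sum>K<R. shell_sum g K)" .
  have "shell_sum g sums (\<Sum>K<R. shell_sum g K)"
    by (intro sums_finite g_outside) simp
  then show ?thesis
    using sum_S by (simp add: g_def[abs_def])
qed

lemma shell_series_minus_finite_sum_le:
  fixes f :: "nat \<Rightarrow> nat \<Rightarrow> real"
  assumes bound: "\<And>K. shell_sum (\<lambda>m n. \<bar>f m n\<bar>) K \<le> \<beta> K" and "summable \<beta>"
    and "finite S" and square: "{..N} \<times> {..N} \<subseteq> S"
  shows "\<bar>(\<Sum>K. shell_sum f K) - (\<Sum>(m, n)\<in>S. f m n)\<bar> \<le> (\<Sum>K. \<beta> (K + Suc N))"
proof -
  define g where "g m n = (if (m, n) \<in> S then f m n else 0)" for m n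
  define h where "h m n = (if (m, n) \<in> S then 0 else f m n)" for m n
  have g: "shell_sum g sums (\<Sum>(m, n)\<in>S. f m n)"
    unfolding g_def using shell_sum_restrict_sums[OF \<open>finite S\<close>] by (simp add: fun_eq_iff)
  have h_bound: "\<bar>shell_sum h K\<bar> \<le> \<beta> K" for K
  proof -
    have "shell_sum (\<lambda>m n. \<bar>h m n\<bar>) K \<le> shell_sum (\<lambda>m n. \<bar>f m n\<bar>) K"
      unfolding shell_sum_def h_def by (intro add_mono sum_mono) auto
    then show ?thesis using abs_shell_sum_le[of h K] bound[of K] by linarith
  qed
  have summable_h: "summable (shell_sum h)"
    by (rule summable_comparison_test'[OF \<open>summable \<beta>\<close>, where N = 0]) (simp add: h_bound)
  have h_square: "shell_sum h K = 0" if "K < Suc N" for K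
  proof -
    have "(K, i) \<in> S" "(i, K) \<in> S" if "i \<le> K" for i
      using square that \<open>K < Suc N\<close> by auto
    then show ?thesis by (auto simp: shell_sum_def h_def intro!: sum.neutral)
  qed
  have "f = (\<lambda>m n. g m n + h m n)"
    by (simp add: g_def h_def fun_eq_iff)
  then have "(\<Sum>K. shell_sum f K) - (\<Sum>(m, n)\<in>S. f m n) = (\<Sum>K. shell_sum h K)"
    using suminf_add[OF sums_summable[OF g] summable_h] sums_unique[OF g] by (simp add: shell_sum_add)
  also have "\<dots> = (\<Sum>K. shell_sum h (K + Suc N))"
    using suminf_split_initial_segment[OF summable_h, of "Suc N"] h_square by simp
  also have "\<bar>\<dots>\<bar> \<le> (\<Sum>K. \<beta> (K + Suc N))"
    unfolding real_norm_def[symmetric]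
    by (intro norm_suminf_le summable_ignore_initial_segment[OF \<open>summable \<beta>\<close>])
      (simp add: h_bound)
  finally show ?thesis .
qed

section \<open>The power series of \<open>I\<^sub>0\<close>\<close>

lemma fact_mult_le_fact_add: "fact m * fact n \<le> (fact (m + n) :: real)"
proof -
  have "fact m * fact n * real ((m + n) choose m) = fact (m + n)"
    using binomial_fact_lemma[of m "m + n"] by (metis add_diff_cancel_left' le_add1 of_nat_fact of_nat_mult)
  moreover have "1 \<le> real ((m + n) choose m)" by (simp add: Suc_leI)
  ultimately show ?thesis
    using mult_left_mono[of 1 "real ((m + n) choose m)" "fact m * fact n"] by simp
qed

definition bessel_term :: "real \<Rightarrow> nat \<Rightarrow> real" where
  "bessel_term z j = z ^ j / (fact j)^2"

lemma summable_bessel_term: "summable (bessel_term z)"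
proof (rule summable_comparison_test'[OF summable_exp[of "\<bar>z\<bar>"], where N = 0])
  fix n :: nat
  have "fact n \<le> (fact n :: real)^2"
    using mult_right_mono[OF fact_ge_1[of n], of "fact n"] by (simp add: power2_eq_square)
  then have "\<bar>z\<bar> ^ n / (fact n)^2 \<le> \<bar>z\<bar> ^ n / fact n"
    by (intro divide_left_mono) auto
  then show "norm (bessel_term z n) \<le> inverse (fact n) * \<bar>z\<bar> ^ n"
    by (simp add: bessel_term_def abs_mult power_abs field_simps)
qed

lemma bessel_term_nonneg: "0 \<le> z \<Longrightarrow> 0 \<le> bessel_term z j"
  by (simp add: bessel_term_def)

lemma bessel_I0_eq_suminf:
  assumes "0 \<le> Y"
  shows "bessel_I0 (2 * sqrt Y * x) = (\<Sum>j. bessel_term (Y * x^2) j)"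
proof -
  have "(2 * sqrt Y * x / 2) ^ (2 * j) = (Y * x^2) ^ j" for j
    using assms by (simp add: power_mult power_mult_distrib)
  then show ?thesis by (simp add: bessel_I0_def bessel_term_def)
qed

lemma one_le_bessel_I0:
  assumes "0 \<le> Y"
  shows "1 \<le> bessel_I0 (2 * sqrt Y * x)"
proof -
  have "(\<Sum>j<1. bessel_term (Y * x^2) j) \<le> (\<Sum>j. bessel_term (Y * x^2) j)"
    using assms by (intro sum_le_suminf summable_bessel_term) (auto simp: bessel_term_nonneg)
  then show ?thesis
    using assms by (simp add: bessel_I0_eq_suminf bessel_term_def[of _ 0])
qed

lemma suminf_bessel_term_tail_le:
  assumes "0 \<le> z"
  shows "(\<Sum>K. bessel_term z (K + L)) \<le> bessel_term z L * (\<Sum>K. bessel_term z K)"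
proof -
  have "bessel_term z (K + L) \<le> bessel_term z L * bessel_term z K" for K
  proof -
    have "(fact K * fact L)^2 \<le> (fact (K + L) :: real)^2"
      using fact_mult_le_fact_add[of K L] by (intro power_mono) auto
    then have "z ^ (K + L) / (fact (K + L))^2 \<le> z ^ (K + L) / (fact K * fact L)^2"
      using assms by (intro divide_left_mono) auto
    then show ?thesis by (simp add: bessel_term_def power_add field_simps)
  qed
  then have "(\<Sum>K. bessel_term z (K + L)) \<le> (\<Sum>K. bessel_term z L * bessel_term z K)"
    by (intro suminf_le summable_mult summable_bessel_term summable_ignore_initial_segment)
  then show ?thesis by (simp add: suminf_mult[OF summable_bessel_term])
qed

lemma sum_power_div_fact_mult_fact:
  "(\<Sum>i\<le>L. G ^ (L - i) / (fact (L - i) * fact i)) = (G + 1) ^ L / (fact L :: real)"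
proof -
  have "(G + 1) ^ L = (\<Sum>i\<le>L. real (L choose i) * 1 ^ i * G ^ (L - i))"
    by (subst add.commute) (rule binomial_ring)
  also have "\<dots> = (\<Sum>i\<le>L. fact L * (G ^ (L - i) / (fact (L - i) * fact i)))"
    by (intro sum.cong refl) (simp add: binomial_fact field_simps)
  also have "\<dots> = fact L * (\<Sum>i\<le>L. G ^ (L - i) / (fact (L - i) * fact i))"
    by (rule sum_distrib_left[symmetric])
  finally show ?thesis by simp
qed

lemma summable_power_series_bessel_bound:
  fixes P :: "nat \<Rightarrow> real"
  assumes "\<And>n. \<bar>P n\<bar> \<le> M * \<rho> ^ n / (fact n)^2"
  shows "summable (\<lambda>n. P n * x ^ n)"
proof (rule summable_comparison_test'[where N = 0])
  show "summable (\<lambda>n. M * bessel_term (\<rho> * \<bar>x\<bar>) n)"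
    by (intro summable_mult summable_bessel_term)
  fix n :: nat
  have "\<bar>P n * x ^ n\<bar> \<le> M * \<rho> ^ n / (fact n)^2 * \<bar>x\<bar> ^ n"
    unfolding abs_mult power_abs by (intro mult_right_mono assms) simp
  then show "norm (P n * x ^ n) \<le> M * bessel_term (\<rho> * \<bar>x\<bar>) n"
    by (simp add: bessel_term_def power_mult_distrib)
qed

section \<open>Iterated integrals over rectangles\<close>

lemma continuous_on_rectangle_integrable:
  fixes f :: "real \<Rightarrow> real \<Rightarrow> real"
  assumes cont: "continuous_on ({a..s} \<times> {c..t}) (\<lambda>(r, w). f r w)"
  shows "r \<in> {a..s} \<Longrightarrow> f r integrable_on {c..t}"
    and "(\<lambda>r. integral {c..t} (f r)) integrable_on {a..s}"
proof -
  show "f r integrable_on {c..t}" if "r \<in> {a..s}"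
  proof -
    have "continuous_on {c..t} (\<lambda>w. (r, w))"
      by (intro continuous_intros)
    then have "continuous_on {c..t} (\<lambda>w. (\<lambda>(r, w). f r w) (r, w))"
      by (rule continuous_on_compose2[OF cont]) (use that in auto)
    then show ?thesis by (intro integrable_continuous_real) simp
  qed
  have "continuous_on {a..s} (\<lambda>r. integral (cbox c t) (f r))"
    using cont by (intro integral_continuous_on_param) simp
  then show "(\<lambda>r. integral {c..t} (f r)) integrable_on {a..s}"
    by (intro integrable_continuous_real) simp
qed

lemma iterated_integral_diff:
  fixes f g :: "real \<Rightarrow> real \<Rightarrow> real"
  assumes "continuous_on ({a..s} \<times> {c..t}) (\<lambda>(r, w). f r w)"
    and "continuous_on ({a..s} \<times> {c..t}) (\<lambda>(r, w). g r w)"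
  shows "integral {a..s} (\<lambda>r. integral {c..t} (\<lambda>w. f r w - g r w))
    = integral {a..s} (\<lambda>r. integral {c..t} (f r)) - integral {a..s} (\<lambda>r. integral {c..t} (g r))"
proof -
  note f = continuous_on_rectangle_integrable[OF assms(1)]
  note g = continuous_on_rectangle_integrable[OF assms(2)]
  have "integral {a..s} (\<lambda>r. integral {c..t} (\<lambda>w. f r w - g r w))
      = integral {a..s} (\<lambda>r. integral {c..t} (f r) - integral {c..t} (g r))"
    using f(1) g(1) by (intro integral_cong integral_diff) auto
  also have "\<dots> = integral {a..s} (\<lambda>r. integral {c..t} (f r)) - integral {a..s} (\<lambda>r. integral {c..t} (g r))"
    using f(2) g(2) by (rule integral_diff)
  finally show ?thesis .
qed

lemma abs_iterated_integral_le:
  fixes f g :: "real \<Rightarrow> real \<Rightarrow> real"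
  assumes "continuous_on ({a..s} \<times> {c..t}) (\<lambda>(r, w). f r w)"
    and "continuous_on ({a..s} \<times> {c..t}) (\<lambda>(r, w). g r w)"
    and le: "\<And>r w. r \<in> {a..s} \<Longrightarrow> w \<in> {c..t} \<Longrightarrow> \<bar>f r w\<bar> \<le> g r w"
  shows "\<bar>integral {a..s} (\<lambda>r. integral {c..t} (f r))\<bar> \<le> integral {a..s} (\<lambda>r. integral {c..t} (g r))"
proof -
  note f = continuous_on_rectangle_integrable[OF assms(1)]
  note g = continuous_on_rectangle_integrable[OF assms(2)]
  have "\<bar>integral {c..t} (f r)\<bar> \<le> integral {c..t} (g r)" if "r \<in> {a..s}" for r
    using integral_norm_bound_integral[OF f(1) g(1)] that le by simp
  then show ?thesis
    using integral_norm_bound_integral[OF f(2) g(2)] by simp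
qed

lemma has_integral_power_shift:
  fixes a s :: real
  assumes "a \<le> s"
  shows "((\<lambda>r. (r - a) ^ m) has_integral (s - a) ^ Suc m / Suc m) {a..s}"
proof -
  have "((\<lambda>r. (r - a) ^ Suc m / Suc m) has_real_derivative (r - a) ^ m) (at r within {a..s})" for r
    by (rule derivative_eq_intros refl | simp)+
  then show ?thesis
    using fundamental_theorem_of_calculus[OF assms, of "\<lambda>r. (r - a) ^ Suc m / Suc m"]
    by (simp add: has_real_derivative_iff_has_vector_derivative)
qed

lemma iterated_integral_polynomial:
  fixes a s c t :: real
  assumes "a \<le> s" "c \<le> t" "finite A" "finite B"
  shows "integral {a..s} (\<lambda>r. integral {c..t} (\<lambda>w. \<Sum>m\<in>A. \<Sum>n\<in>B. \<gamma> m n * (r - a) ^ m * (w - c) ^ n))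
    = (\<Sum>m\<in>A. \<Sum>n\<in>B. \<gamma> m n * ((s - a) ^ Suc m / Suc m) * ((t - c) ^ Suc n / Suc n))"
proof -
  have inner: "((\<lambda>w. \<Sum>m\<in>A. \<Sum>n\<in>B. \<gamma> m n * (r - a) ^ m * (w - c) ^ n) has_integral
      (\<Sum>m\<in>A. \<Sum>n\<in>B. \<gamma> m n * (r - a) ^ m * ((t - c) ^ Suc n / Suc n))) {c..t}" for r
    using assms by (intro has_integral_sum has_integral_mult_right has_integral_power_shift)
  have outer: "((\<lambda>r. \<Sum>m\<in>A. \<Sum>n\<in>B. \<gamma> m n * (r - a) ^ m * ((t - c) ^ Suc n / Suc n)) has_integral
      (\<Sum>m\<in>A. \<Sum>n\<in>B. \<gamma> m n * ((s - a) ^ Suc m / Suc m) * ((t - c) ^ Suc n / Suc n))) {a..s}"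
    using assms
    by (intro has_integral_sum has_integral_mult_left has_integral_mult_right has_integral_power_shift)
  show ?thesis
    unfolding integral_unique[OF inner] by (rule integral_unique[OF outer])
qed

lemma tendsto_iterated_integral_uniform_limit:
  fixes F :: "nat \<Rightarrow> real \<Rightarrow> real \<Rightarrow> real"
  assumes "a \<le> s" "c \<le> t"
    and lim: "uniform_limit ({a..s} \<times> {c..t}) (\<lambda>n (r, w). F n r w) (\<lambda>(r, w). G r w) sequentially"
    and cont: "\<And>n. continuous_on ({a..s} \<times> {c..t}) (\<lambda>(r, w). F n r w)"
  shows "(\<lambda>n. integral {a..s} (\<lambda>r. integral {c..t} (F n r)))
    \<longlonglongrightarrow> integral {a..s} (\<lambda>r. integral {c..t} (G r))"
proof (rule tendstoI)
  fix \<epsilon> :: real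
  assume "0 < \<epsilon>"
  have cont_G: "continuous_on ({a..s} \<times> {c..t}) (\<lambda>(r, w). G r w)"
    using lim cont by (intro uniform_limit_theorem) auto
  have cont_diff: "continuous_on ({a..s} \<times> {c..t}) (\<lambda>(r, w). F n r w - G r w)" for n
    using continuous_on_diff[OF cont[of n] cont_G] by (simp add: split_def)
  define area where "area = (s - a) * (t - c)"
  have "0 \<le> area" unfolding area_def using assms by simp
  then have "0 < \<epsilon> / (area + 1)" using \<open>0 < \<epsilon>\<close> by simp
  with lim have "\<forall>\<^sub>F n in sequentially. \<forall>z \<in> {a..s} \<times> {c..t}.
      dist (case_prod (F n) z) (case_prod G z) < \<epsilon> / (area + 1)"
    by (rule uniform_limitD)
  then show "\<forall>\<^sub>F n in sequentially. dist (integral {a..s} (\<lambda>r. integral {c..t} (F n r)))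
      (integral {a..s} (\<lambda>r. integral {c..t} (G r))) < \<epsilon>"
  proof eventually_elim
    case (elim n)
    have "dist (integral {a..s} (\<lambda>r. integral {c..t} (F n r))) (integral {a..s} (\<lambda>r. integral {c..t} (G r)))
        = \<bar>integral {a..s} (\<lambda>r. integral {c..t} (\<lambda>w. F n r w - G r w))\<bar>"
      by (simp add: dist_real_def iterated_integral_diff[OF cont cont_G])
    also have "\<dots> \<le> integral {a..s} (\<lambda>r. integral {c..t} (\<lambda>w. \<epsilon> / (area + 1)))"
      using elim by (intro abs_iterated_integral_le cont_diff continuous_on_const)
        (auto simp: dist_real_def intro: less_imp_le)
    also have "\<dots> = \<epsilon> / (area + 1) * area"
      using assms by (simp add: area_def)
    also have "\<dots> < \<epsilon>"
      using \<open>0 < \<epsilon>\<close> \<open>0 \<le> area\<close> by (simp add: field_simps)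
    finally show ?case .
  qed
qed

lemma abs_iterated_integral_le_monomial:
  fixes e :: "real \<Rightarrow> real \<Rightarrow> real"
  assumes "a \<le> s" "c \<le> t"
    and cont: "continuous_on ({a..s} \<times> {c..t}) (\<lambda>(r, w). e r w)"
    and le: "\<And>r w. r \<in> {a..s} \<Longrightarrow> w \<in> {c..t} \<Longrightarrow> \<bar>e r w\<bar> \<le> \<kappa> * (r - a) ^ j * (w - c) ^ j"
  shows "\<bar>integral {a..s} (\<lambda>r. integral {c..t} (e r))\<bar>
    \<le> \<kappa> * ((s - a) ^ Suc j / Suc j) * ((t - c) ^ Suc j / Suc j)"
proof -
  have "continuous_on ({a..s} \<times> {c..t}) (\<lambda>(r, w). \<Sum>m\<in>{j}. \<Sum>n\<in>{j}. \<kappa> * (r - a) ^ m * (w - c) ^ n)"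
    by (simp add: split_def) (intro continuous_intros)
  with cont have "\<bar>integral {a..s} (\<lambda>r. integral {c..t} (e r))\<bar>
      \<le> integral {a..s} (\<lambda>r. integral {c..t} (\<lambda>w. \<Sum>m\<in>{j}. \<Sum>n\<in>{j}. \<kappa> * (r - a) ^ m * (w - c) ^ n))"
    by (rule abs_iterated_integral_le) (simp add: le)
  also have "\<dots> = \<kappa> * ((s - a) ^ Suc j / Suc j) * ((t - c) ^ Suc j / Suc j)"
    using assms(1,2) by (subst iterated_integral_polynomial) auto
  finally show ?thesis .
qed

lemma goursat_homogeneous_eq_zero:
  fixes e :: "real \<Rightarrow> real \<Rightarrow> real"
  assumes cont: "continuous_on ({a..b} \<times> {c..d}) (\<lambda>(s, t). e s t)"
    and eq: "\<And>s t. s \<in> {a..b} \<Longrightarrow> t \<in> {c..d} \<Longrightarrow>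
      e s t = C * integral {a..s} (\<lambda>r. integral {c..t} (e r))"
    and "s \<in> {a..b}" "t \<in> {c..d}"
  shows "e s t = 0"
proof -
  obtain B where B: "\<And>s t. s \<in> {a..b} \<Longrightarrow> t \<in> {c..d} \<Longrightarrow> \<bar>e s t\<bar> \<le> B"
    using compact_imp_bounded[OF compact_continuous_image[OF cont compact_Times]]
    by (force simp: bounded_iff)
  have bound: "\<bar>e s t\<bar> \<le> B * bessel_term (\<bar>C\<bar> * (s - a) * (t - c)) j"
    if "s \<in> {a..b}" "t \<in> {c..d}" for j s t
    using that
  proof (induction j arbitrary: s t)
    case 0
    then show ?case using B by (simp add: bessel_term_def)
  next
    case (Suc j)
    define \<kappa> where "\<kappa> = B * \<bar>C\<bar> ^ j / (fact j)^2"
    have "continuous_on ({a..s} \<times> {c..t}) (\<lambda>(r, w). e r w)"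
      using Suc.prems by (intro continuous_on_subset[OF cont]) auto
    moreover have "\<bar>e r w\<bar> \<le> \<kappa> * (r - a) ^ j * (w - c) ^ j" if "r \<in> {a..s}" "w \<in> {c..t}" for r w
      using Suc.IH[of r w] that Suc.prems by (simp add: \<kappa>_def bessel_term_def power_mult_distrib)
    ultimately have "\<bar>e s t\<bar> \<le> \<bar>C\<bar> * (\<kappa> * ((s - a) ^ Suc j / Suc j) * ((t - c) ^ Suc j / Suc j))"
      using Suc.prems unfolding eq[OF Suc.prems] abs_mult
      by (intro mult_left_mono abs_iterated_integral_le_monomial) auto
    also have "\<dots> = B * bessel_term (\<bar>C\<bar> * (s - a) * (t - c)) (Suc j)"
    proof -
      have "\<bar>C\<bar> * (\<kappa> * (x ^ Suc j / Suc j) * (y ^ Suc j / Suc j)) = B * bessel_term (\<bar>C\<bar> * x * y) (Suc j)"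
        for x y :: real
        by (simp add: \<kappa>_def bessel_term_def power2_eq_square field_simps)
      then show ?thesis .
    qed
    finally show ?case .
  qed
  have "(\<lambda>j. B * bessel_term (\<bar>C\<bar> * (s - a) * (t - c)) j) \<longlonglongrightarrow> 0"
    by (intro tendsto_mult_right_zero summable_LIMSEQ_zero summable_bessel_term)
  then have "\<bar>e s t\<bar> \<le> 0"
    by (rule LIMSEQ_le_const) (use bound[OF assms(3,4)] in auto)
  then show ?thesis by simp
qed

section \<open>The double power series of the solution\<close>

(* k (a + x) (c + y) is the sum of goursat_coeff p q C m n * x^m * y^n: the coefficients on
   the axes m = 0 and n = 0 are those of the boundary data, and k_st = C k turns into the
   recursion goursat_coeff_Suc_Suc, which this closed form solves. *)
definition goursat_coeff ::
  "(nat \<Rightarrow> real) \<Rightarrow> (nat \<Rightarrow> real) \<Rightarrow> real \<Rightarrow> nat \<Rightarrow> nat \<Rightarrow> real" where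
  "goursat_coeff p q C m n =
     (if n \<le> m then C ^ n * p (m - n) * fact (m - n) / (fact m * fact n)
      else C ^ m * q (n - m) * fact (n - m) / (fact m * fact n))"

definition goursat_term ::
  "(nat \<Rightarrow> real) \<Rightarrow> (nat \<Rightarrow> real) \<Rightarrow> real \<Rightarrow> real \<Rightarrow> real \<Rightarrow> nat \<Rightarrow> nat \<Rightarrow> real" where
  "goursat_term p q C x y m n = goursat_coeff p q C m n * x ^ m * y ^ n"

definition goursat_series ::
  "(nat \<Rightarrow> real) \<Rightarrow> (nat \<Rightarrow> real) \<Rightarrow> real \<Rightarrow> real \<Rightarrow> real \<Rightarrow> real" where
  "goursat_series p q C x y = (\<Sum>K. shell_sum (goursat_term p q C x y) K)"

lemma goursat_coeff_Suc_Suc: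
  "goursat_coeff p q C (Suc m) (Suc n) = C * goursat_coeff p q C m n / (Suc m * Suc n)"
  unfolding goursat_coeff_def by (auto simp: field_simps)

lemma goursat_coeff_transpose:
  "p 0 = q 0 \<Longrightarrow> goursat_coeff q p C n m = goursat_coeff p q C m n"
  unfolding goursat_coeff_def by (auto simp: mult_ac)

lemma goursat_square_sum_Suc:
  "(\<Sum>m<Suc L. \<Sum>n<Suc L. goursat_term p q C x y m n)
    = (\<Sum>n<Suc L. p n * x ^ n) + (\<Sum>n<Suc L. q n * y ^ n) - q 0
      + C * (\<Sum>m<L. \<Sum>n<L. goursat_coeff p q C m n * (x ^ Suc m / Suc m) * (y ^ Suc n / Suc n))"
proof -
  have "(\<Sum>m<L. \<Sum>n<L. goursat_term p q C x y (Suc m) (Suc n))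
      = C * (\<Sum>m<L. \<Sum>n<L. goursat_coeff p q C m n * (x ^ Suc m / Suc m) * (y ^ Suc n / Suc n))"
    unfolding goursat_term_def goursat_coeff_Suc_Suc sum_distrib_left
    by (intro sum.cong refl) (simp add: field_simps)
  moreover have "goursat_term p q C x y m 0 = p m * x ^ m" for m
    by (simp add: goursat_term_def goursat_coeff_def)
  moreover have "goursat_term p q C x y 0 (Suc n) = q (Suc n) * y ^ Suc n" for n
    by (simp add: goursat_term_def goursat_coeff_def)
  ultimately show ?thesis
    unfolding sum.lessThan_Suc_shift by (simp add: sum.distrib del: sum.lessThan_Suc)
qed

lemma goursat_term_transpose:
  "p 0 = q 0 \<Longrightarrow> goursat_term q p C y x n m = goursat_term p q C x y m n"
  by (simp add: goursat_term_def goursat_coeff_transpose mult_ac)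

lemma sum_p_hat_eq_goursat_region_sum:
  "(\<Sum>n=0..N. p_hat p q C c d N n * x ^ n)
    = (\<Sum>(m, n)\<in>Sigma {..N} (\<lambda>m. {..m + N}). goursat_term p q C x (d - c) m n)"
proof -
  define y where "y = d - c"
  let ?f = "goursat_term p q C x y"
  have row: "p_hat p q C c d N m * x ^ m = (\<Sum>n\<le>m + N. ?f m n)" for m
  proof -
    have "(\<Sum>j=0..m. p j * (C * y) ^ (m - j) * fact j / (fact (m - j) * fact m)) * x ^ m
        = (\<Sum>i=0..m. p (m - i) * (C * y) ^ (m - (m - i)) * fact (m - i) / (fact (m - (m - i)) * fact m) * x ^ m)"
      by (subst sum.atLeastAtMost_rev) (simp add: sum_distrib_right)
    also have "\<dots> = (\<Sum>i=0..m. ?f m i)"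
      by (intro sum.cong refl) (auto simp: goursat_term_def goursat_coeff_def power_mult_distrib field_simps)
    finally have lower: "(\<Sum>j=0..m. p j * (C * y) ^ (m - j) * fact j / (fact (m - j) * fact m)) * x ^ m
        = (\<Sum>i=0..m. ?f m i)" .
    have "(\<Sum>j=1..N. q j * C ^ m * y ^ (m + j) * fact j / (fact (m + j) * fact m)) * x ^ m
        = (\<Sum>j=1..N. ?f m (j + m))"
      unfolding sum_distrib_right
      by (intro sum.cong refl) (auto simp: goursat_term_def goursat_coeff_def field_simps)
    also have "\<dots> = (\<Sum>n=m+1..m+N. ?f m n)"
      using sum.shift_bounds_cl_nat_ivl[of "?f m" 1 m N] by (simp add: add.commute)
    finally have upper: "(\<Sum>j=1..N. q j * C ^ m * y ^ (m + j) * fact j / (fact (m + j) * fact m)) * x ^ m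
        = (\<Sum>n=m+1..m+N. ?f m n)" .
    show ?thesis
      unfolding p_hat_def y_def[symmetric] distrib_right lower upper atLeast0AtMost[symmetric]
      by (rule sum.ub_add_nat[symmetric]) simp
  qed
  show ?thesis
    unfolding row y_def by (simp add: sum.Sigma atLeast0AtMost)
qed

lemma k_hat_eq_goursat_region_sums:
  fixes N :: nat
  assumes "p 0 = q 0"
  defines "R \<equiv> Sigma {..N} (\<lambda>m. {..m + N})"
  shows "k_hat p q C a b c d N
    = ((\<Sum>(m, n)\<in>R. goursat_term p q C (b - a) (d - c) m n)
      + (\<Sum>(m, n)\<in>prod.swap ` R. goursat_term p q C (b - a) (d - c) m n)) / 2"
proof -
  have "(\<Sum>n=0..N. p_hat q p C a b N n * (d - c) ^ n) = (\<Sum>(m, n)\<in>R. goursat_term p q C (b - a) (d - c) n m)"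
    unfolding R_def sum_p_hat_eq_goursat_region_sum goursat_term_transpose[of p q, OF assms(1)] ..
  also have "\<dots> = (\<Sum>(m, n)\<in>prod.swap ` R. goursat_term p q C (b - a) (d - c) m n)"
    by (simp add: sum.reindex case_prod_beta)
  finally show ?thesis
    unfolding k_hat_def sum.distrib R_def sum_p_hat_eq_goursat_region_sum by simp
qed

locale goursat_coeff_bounds =
  fixes p q :: "nat \<Rightarrow> real" and C M G \<Delta> :: real
  assumes p_bound: "\<And>n. \<bar>p n\<bar> \<le> M * (G * \<bar>C\<bar> * \<Delta>) ^ n / (fact n)^2"
    and q_bound: "\<And>n. \<bar>q n\<bar> \<le> M * (G * \<bar>C\<bar> * \<Delta>) ^ n / (fact n)^2"
    and G_nonneg: "0 \<le> G"
begin

lemma M_nonneg: "0 \<le> M"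
  using p_bound[of 0] by simp

lemma abs_coeff_monomial_le:
  assumes P: "\<And>n. \<bar>P n\<bar> \<le> M * (G * \<bar>C\<bar> * \<Delta>) ^ n / (fact n)^2"
    and "0 \<le> u" "u \<le> \<Delta>" "0 \<le> v" "v \<le> \<Delta>"
  shows "\<bar>C ^ i * P k * fact k / (fact (i + k) * fact i) * u ^ (i + k) * v ^ i\<bar>
    \<le> M * (\<bar>C\<bar> * \<Delta>^2) ^ (i + k) * G ^ k / (fact (i + k) * fact k * fact i)"
proof -
  have "\<bar>C ^ i * P k * fact k / (fact (i + k) * fact i) * u ^ (i + k) * v ^ i\<bar>
      = (\<bar>C\<bar> ^ i * (fact k / (fact (i + k) * fact i))) * \<bar>P k\<bar> * (u ^ (i + k) * v ^ i)"
    using assms by (simp add: abs_mult power_abs)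
  also have "\<dots> \<le> (\<bar>C\<bar> ^ i * (fact k / (fact (i + k) * fact i)))
      * (M * (G * \<bar>C\<bar> * \<Delta>) ^ k / (fact k)^2) * (\<Delta> ^ (i + k) * \<Delta> ^ i)"
    using assms M_nonneg G_nonneg
    by (intro mult_mono mult_left_mono P power_mono) (auto intro!: mult_nonneg_nonneg)
  also have "\<dots> = M * (\<bar>C\<bar> * \<Delta>^2) ^ (i + k) * G ^ k / (fact (i + k) * fact k * fact i)"
    by (simp add: power_add power2_eq_square field_simps)
  finally show ?thesis .
qed

lemma abs_goursat_term_le:
  assumes "0 \<le> x" "x \<le> \<Delta>" "0 \<le> y" "y \<le> \<Delta>"
  shows "\<bar>goursat_term p q C x y m n\<bar>
    \<le> M * (\<bar>C\<bar> * \<Delta>^2) ^ max m n * G ^ (max m n - min m n)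
        / (fact (max m n) * fact (max m n - min m n) * fact (min m n))"
proof (cases "n \<le> m")
  case True
  then obtain k where m: "m = n + k" using le_Suc_ex by blast
  have "goursat_term p q C x y m n = C ^ n * p k * fact k / (fact (n + k) * fact n) * x ^ (n + k) * y ^ n"
    by (simp add: goursat_term_def goursat_coeff_def m)
  moreover have "max m n = n + k" "min m n = n" using m by simp_all
  ultimately show ?thesis
    using abs_coeff_monomial_le[OF p_bound assms, of n k] by (simp only: add_diff_cancel_left')
next
  case False
  then obtain k where n: "n = m + k" "0 < k"
    by (intro that[of "n - m"]) auto
  have "goursat_term p q C x y m n = C ^ m * q k * fact k / (fact (m + k) * fact m) * y ^ (m + k) * x ^ m"
    using n by (simp add: goursat_term_def goursat_coeff_def mult_ac)
  moreover have "max m n = m + k" "min m n = m" using n by simp_all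
  ultimately show ?thesis
    using abs_coeff_monomial_le[OF q_bound assms(3,4,1,2), of m k] by (simp only: add_diff_cancel_left')
qed

lemma shell_sum_abs_goursat_term_le:
  assumes "0 \<le> x" "x \<le> \<Delta>" "0 \<le> y" "y \<le> \<Delta>"
  shows "shell_sum (\<lambda>m n. \<bar>goursat_term p q C x y m n\<bar>) L \<le> 2 * M * bessel_term ((G + 1) * \<bar>C\<bar> * \<Delta>^2) L"
proof -
  define \<beta> where "\<beta> i = M * (\<bar>C\<bar> * \<Delta>^2) ^ L * G ^ (L - i) / (fact L * fact (L - i) * fact i)" for i
  have \<beta>_nonneg: "0 \<le> \<beta> i" for i
    using M_nonneg G_nonneg by (simp add: \<beta>_def)
  have "(\<Sum>i\<le>L. \<beta> i) = M * (\<bar>C\<bar> * \<Delta>^2) ^ L / fact L * (\<Sum>i\<le>L. G ^ (L - i) / (fact (L - i) * fact i))"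
    by (simp add: \<beta>_def sum_distrib_left field_simps)
  also have "\<dots> = M * bessel_term ((G + 1) * \<bar>C\<bar> * \<Delta>^2) L"
    by (simp add: sum_power_div_fact_mult_fact bessel_term_def power_mult_distrib power2_eq_square)
  finally have sum_\<beta>: "(\<Sum>i\<le>L. \<beta> i) = M * bessel_term ((G + 1) * \<bar>C\<bar> * \<Delta>^2) L" .
  have "\<bar>goursat_term p q C x y L i\<bar> \<le> \<beta> i" if "i \<le> L" for i
    using abs_goursat_term_le[OF assms, of L i] that by (simp add: \<beta>_def max_absorb1 min_absorb2)
  then have "(\<Sum>i\<le>L. \<bar>goursat_term p q C x y L i\<bar>) \<le> (\<Sum>i\<le>L. \<beta> i)"
    by (intro sum_mono) simp
  moreover have "\<bar>goursat_term p q C x y j L\<bar> \<le> \<beta> j" if "j < L" for j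
    using abs_goursat_term_le[OF assms, of j L] that by (simp add: \<beta>_def max_absorb2 min_absorb1)
  then have "(\<Sum>j<L. \<bar>goursat_term p q C x y j L\<bar>) \<le> (\<Sum>j<L. \<beta> j)"
    by (intro sum_mono) simp
  moreover have "(\<Sum>j<L. \<beta> j) \<le> (\<Sum>j\<le>L. \<beta> j)"
    by (intro sum_mono2 \<beta>_nonneg) auto
  ultimately show ?thesis
    unfolding shell_sum_def using sum_\<beta> by linarith
qed

lemma summable_shell_sum_goursat_term:
  assumes "0 \<le> x" "x \<le> \<Delta>" "0 \<le> y" "y \<le> \<Delta>"
  shows "summable (shell_sum (goursat_term p q C x y))"
proof (rule summable_comparison_test'[where N = 0])
  show "summable (\<lambda>L. 2 * M * bessel_term ((G + 1) * \<bar>C\<bar> * \<Delta>^2) L)"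
    by (intro summable_mult summable_bessel_term)
  show "norm (shell_sum (goursat_term p q C x y) L) \<le> 2 * M * bessel_term ((G + 1) * \<bar>C\<bar> * \<Delta>^2) L" for L
    using abs_shell_sum_le[of "goursat_term p q C x y" L] shell_sum_abs_goursat_term_le[OF assms, of L]
    unfolding real_norm_def by linarith
qed

lemma uniform_limit_goursat_square_sum:
  assumes "b - a \<le> \<Delta>" "d - c \<le> \<Delta>"
  shows "uniform_limit ({a..b} \<times> {c..d})
    (\<lambda>L (s, t). \<Sum>m<L. \<Sum>n<L. goursat_term p q C (s - a) (t - c) m n)
    (\<lambda>(s, t). goursat_series p q C (s - a) (t - c)) sequentially"
proof -
  have "uniform_limit ({a..b} \<times> {c..d})
      (\<lambda>L z. \<Sum>K<L. shell_sum (goursat_term p q C (fst z - a) (snd z - c)) K)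
      (\<lambda>z. \<Sum>K. shell_sum (goursat_term p q C (fst z - a) (snd z - c)) K) sequentially"
  proof (rule Weierstrass_m_test)
    show "summable (\<lambda>L. 2 * M * bessel_term ((G + 1) * \<bar>C\<bar> * \<Delta>^2) L)"
      by (intro summable_mult summable_bessel_term)
    fix L z
    assume "z \<in> {a..b} \<times> {c..d}"
    then have "0 \<le> fst z - a" "fst z - a \<le> \<Delta>" "0 \<le> snd z - c" "snd z - c \<le> \<Delta>"
      using assms by auto
    then show "norm (shell_sum (goursat_term p q C (fst z - a) (snd z - c)) L)
        \<le> 2 * M * bessel_term ((G + 1) * \<bar>C\<bar> * \<Delta>^2) L"
      using abs_shell_sum_le[of "goursat_term p q C (fst z - a) (snd z - c)" L]
        shell_sum_abs_goursat_term_le[of "fst z - a" "snd z - c" L]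
      unfolding real_norm_def by linarith
  qed
  then show ?thesis
    by (simp add: split_def sum_square_eq_sum_shell_sum goursat_series_def)
qed

lemma continuous_on_goursat_square_sum:
  "continuous_on S (\<lambda>(s, t). \<Sum>m<L. \<Sum>n<L. goursat_term p q C (s - a) (t - c) m n)"
  by (simp add: split_def goursat_term_def) (intro continuous_intros)

lemma continuous_on_goursat_series:
  assumes "b - a \<le> \<Delta>" "d - c \<le> \<Delta>"
  shows "continuous_on ({a..b} \<times> {c..d}) (\<lambda>(s, t). goursat_series p q C (s - a) (t - c))"
  using uniform_limit_goursat_square_sum[OF assms] continuous_on_goursat_square_sum
  by (intro uniform_limit_theorem) auto

lemma goursat_series_integral_equation:
  assumes "b - a \<le> \<Delta>" "d - c \<le> \<Delta>" and s: "s \<in> {a..b}" and t: "t \<in> {c..d}"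
  shows "goursat_series p q C (s - a) (t - c)
    = (\<Sum>n. p n * (s - a) ^ n) + (\<Sum>n. q n * (t - c) ^ n) - q 0
      + C * integral {a..s} (\<lambda>r. integral {c..t} (\<lambda>w. goursat_series p q C (r - a) (w - c)))"
proof -
  let ?x = "s - a" and ?y = "t - c"
  let ?I = "integral {a..s} (\<lambda>r. integral {c..t} (\<lambda>w. goursat_series p q C (r - a) (w - c)))"
  have xy: "0 \<le> ?x" "?x \<le> \<Delta>" "0 \<le> ?y" "?y \<le> \<Delta>" using assms by auto
  have "(\<lambda>L. \<Sum>m<L. \<Sum>n<L. goursat_term p q C ?x ?y m n) \<longlonglongrightarrow> goursat_series p q C ?x ?y"
    unfolding sum_square_eq_sum_shell_sum goursat_series_def
    by (rule summable_LIMSEQ[OF summable_shell_sum_goursat_term[OF xy]])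
  then have lim_lhs:
    "(\<lambda>L. \<Sum>m<Suc L. \<Sum>n<Suc L. goursat_term p q C ?x ?y m n) \<longlonglongrightarrow> goursat_series p q C ?x ?y"
    by (rule LIMSEQ_Suc)
  have sub: "{a..s} \<times> {c..t} \<subseteq> {a..b} \<times> {c..d}" using s t by auto
  have "(\<lambda>L. integral {a..s} (\<lambda>r. integral {c..t} (\<lambda>w. \<Sum>m<L. \<Sum>n<L. goursat_term p q C (r - a) (w - c) m n)))
      \<longlonglongrightarrow> ?I"
    using s t uniform_limit_on_subset[OF uniform_limit_goursat_square_sum[OF assms(1,2)] sub]
    by (intro tendsto_iterated_integral_uniform_limit continuous_on_goursat_square_sum) auto
  moreover have "integral {a..s} (\<lambda>r. integral {c..t} (\<lambda>w. \<Sum>m<L. \<Sum>n<L. goursat_term p q C (r - a) (w - c) m n))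
      = (\<Sum>m<L. \<Sum>n<L. goursat_coeff p q C m n * (?x ^ Suc m / Suc m) * (?y ^ Suc n / Suc n))" for L
    using s t by (simp add: goursat_term_def iterated_integral_polynomial)
  ultimately have lim_int: "(\<lambda>L. \<Sum>m<L. \<Sum>n<L. goursat_coeff p q C m n * (?x ^ Suc m / Suc m) * (?y ^ Suc n / Suc n))
      \<longlonglongrightarrow> ?I"
    by simp
  have "(\<lambda>L. \<Sum>m<Suc L. \<Sum>n<Suc L. goursat_term p q C ?x ?y m n)
      \<longlonglongrightarrow> (\<Sum>n. p n * ?x ^ n) + (\<Sum>n. q n * ?y ^ n) - q 0 + C * ?I"
    unfolding goursat_square_sum_Suc
    by (intro tendsto_intros lim_int LIMSEQ_Suc[OF summable_LIMSEQ]
        summable_power_series_bessel_bound[OF p_bound] summable_power_series_bessel_bound[OF q_bound])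
  with lim_lhs show ?thesis by (rule LIMSEQ_unique)
qed

lemma goursat_solution_eq_goursat_series:
  assumes "b - a \<le> \<Delta>" "d - c \<le> \<Delta>" "c \<le> d"
    and sol: "goursat_solution a b c d C k"
    and bottom: "\<forall>s\<in>{a..b}. k s c = (\<Sum>n. p n * (s - a) ^ n)"
    and left: "\<forall>t\<in>{c..d}. k a t = (\<Sum>n. q n * (t - c) ^ n)"
    and "s \<in> {a..b}" "t \<in> {c..d}"
  shows "k s t = goursat_series p q C (s - a) (t - c)"
proof -
  define V where "V s t = goursat_series p q C (s - a) (t - c)" for s t
  have cont_k: "continuous_on ({a..b} \<times> {c..d}) (\<lambda>(s, t). k s t)"
    using sol by (simp add: goursat_solution_def)
  have cont_V: "continuous_on ({a..b} \<times> {c..d}) (\<lambda>(s, t). V s t)"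
    unfolding V_def using continuous_on_goursat_series[OF assms(1,2)] .
  have "k s t - V s t = 0"
  proof (rule goursat_homogeneous_eq_zero[where e = "\<lambda>s t. k s t - V s t" and C = C])
    show "continuous_on ({a..b} \<times> {c..d}) (\<lambda>(s, t). k s t - V s t)"
      using continuous_on_diff[OF cont_k cont_V] by (simp add: split_def)
    fix s t
    assume st: "s \<in> {a..b}" "t \<in> {c..d}"
    then have sub: "{a..s} \<times> {c..t} \<subseteq> {a..b} \<times> {c..d}" by auto
    have "k a c = q 0"
      using left \<open>c \<le> d\<close> by simp
    then have "k s t = (\<Sum>n. p n * (s - a) ^ n) + (\<Sum>n. q n * (t - c) ^ n) - q 0
        + C * integral {a..s} (\<lambda>r. integral {c..t} (k r))"
      using sol st bottom left by (simp add: goursat_solution_def)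
    moreover have "V s t = (\<Sum>n. p n * (s - a) ^ n) + (\<Sum>n. q n * (t - c) ^ n) - q 0
        + C * integral {a..s} (\<lambda>r. integral {c..t} (V r))"
      unfolding V_def using goursat_series_integral_equation[OF assms(1,2) st] .
    ultimately show "k s t - V s t = C * integral {a..s} (\<lambda>r. integral {c..t} (\<lambda>w. k r w - V r w))"
      by (simp add: iterated_integral_diff[OF continuous_on_subset[OF cont_k sub]
            continuous_on_subset[OF cont_V sub]] algebra_simps)
  qed (use assms in auto)
  then show ?thesis by (simp add: V_def)
qed

lemma abs_goursat_series_minus_sum_le:
  assumes "0 \<le> x" "x \<le> \<Delta>" "0 \<le> y" "y \<le> \<Delta>" and "finite S" "{..N} \<times> {..N} \<subseteq> S"
  shows "\<bar>goursat_series p q C x y - (\<Sum>(m, n)\<in>S. goursat_term p q C x y m n)\<bar>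
    \<le> 2 * M * bessel_term ((G + 1) * \<bar>C\<bar> * \<Delta>^2) (Suc N) * (\<Sum>K. bessel_term ((G + 1) * \<bar>C\<bar> * \<Delta>^2) K)"
proof -
  let ?z = "(G + 1) * \<bar>C\<bar> * \<Delta>^2"
  have z: "0 \<le> ?z" using G_nonneg by simp
  have "\<bar>goursat_series p q C x y - (\<Sum>(m, n)\<in>S. goursat_term p q C x y m n)\<bar>
      \<le> (\<Sum>K. 2 * M * bessel_term ?z (K + Suc N))"
    unfolding goursat_series_def
    using shell_sum_abs_goursat_term_le[OF assms(1-4)] assms(5,6)
    by (intro shell_series_minus_finite_sum_le summable_mult summable_bessel_term)
  also have "\<dots> = 2 * M * (\<Sum>K. bessel_term ?z (K + Suc N))"
    by (intro suminf_mult summable_ignore_initial_segment summable_bessel_term)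
  also have "\<dots> \<le> 2 * M * (bessel_term ?z (Suc N) * (\<Sum>K. bessel_term ?z K))"
    by (intro mult_left_mono suminf_bessel_term_tail_le z) (use M_nonneg in simp)
  finally show ?thesis by (simp add: mult_ac)
qed

lemma abs_goursat_series_minus_k_hat_le:
  assumes "p 0 = q 0" "a \<le> b" "c \<le> d" "b - a \<le> \<Delta>" "d - c \<le> \<Delta>"
  shows "\<bar>goursat_series p q C (b - a) (d - c) - k_hat p q C a b c d N\<bar>
    \<le> 2 * M * bessel_I0 (2 * sqrt ((G + 1) * \<bar>C\<bar>) * \<Delta>)
        * (\<bar>C\<bar> * \<Delta>^2) ^ (N + 1) * (G + 1) ^ (N + 1) / (fact (N + 1))^2"
proof -
  let ?z = "(G + 1) * \<bar>C\<bar> * \<Delta>^2"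
  define R where "R = Sigma {..N} (\<lambda>m. {..m + N})"
  have R: "finite R" "{..N} \<times> {..N} \<subseteq> R"
    by (auto simp: R_def)
  moreover from R have "finite (prod.swap ` R)" "{..N} \<times> {..N} \<subseteq> prod.swap ` R"
    using image_mono[OF R(2), of prod.swap] by (simp_all add: product_swap)
  ultimately have bound: "\<bar>goursat_series p q C (b - a) (d - c) - (\<Sum>(m, n)\<in>S. goursat_term p q C (b - a) (d - c) m n)\<bar>
      \<le> 2 * M * bessel_term ?z (Suc N) * (\<Sum>K. bessel_term ?z K)"
    if "S = R \<or> S = prod.swap ` R" for S
    using that assms(2-5) by (intro abs_goursat_series_minus_sum_le) auto
  have "\<bar>goursat_series p q C (b - a) (d - c) - k_hat p q C a b c d N\<bar>
      \<le> 2 * M * bessel_term ?z (Suc N) * (\<Sum>K. bessel_term ?z K)"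
    unfolding k_hat_eq_goursat_region_sums[where p = p and q = q, OF assms(1)] R_def[symmetric]
    using bound[of R] bound[of "prod.swap ` R"] by (simp add: abs_le_iff field_simps)
  also have "\<dots> = 2 * M * bessel_I0 (2 * sqrt ((G + 1) * \<bar>C\<bar>) * \<Delta>)
      * (\<bar>C\<bar> * \<Delta>^2) ^ (N + 1) * (G + 1) ^ (N + 1) / (fact (N + 1))^2"
  proof -
    have "bessel_I0 (2 * sqrt ((G + 1) * \<bar>C\<bar>) * \<Delta>) = (\<Sum>K. bessel_term ?z K)"
      using G_nonneg by (simp add: bessel_I0_eq_suminf)
    moreover have "bessel_term ?z (Suc N) = (\<bar>C\<bar> * \<Delta>^2) ^ (N + 1) * (G + 1) ^ (N + 1) / (fact (N + 1))^2"
      by (simp add: bessel_term_def power_mult_distrib mult_ac)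
    ultimately show ?thesis
      by (simp add: mult_ac)
  qed
  finally show ?thesis .
qed

end

section \<open>The weighted norm and the error bound\<close>

lemma abs_le_of_weighted_SUP_le:
  fixes P :: "nat \<Rightarrow> real"
  assumes "bdd_above (range (\<lambda>n. \<bar>(fact n)^2 * P n / \<rho> ^ n\<bar>))" "0 < \<rho>"
    and "(SUP n. \<bar>(fact n)^2 * P n / \<rho> ^ n\<bar>) \<le> M"
  shows "\<bar>P n\<bar> \<le> M * \<rho> ^ n / (fact n)^2"
proof -
  have "\<bar>P n\<bar> = \<bar>(fact n)^2 * P n / \<rho> ^ n\<bar> * (\<rho> ^ n / (fact n)^2)"
    using assms(2) by (simp add: abs_mult)
  also have "\<dots> \<le> M * (\<rho> ^ n / (fact n)^2)"
    using order_trans[OF cSUP_upper[OF UNIV_I assms(1)] assms(3)] assms(2)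
    by (intro mult_right_mono) auto
  finally show ?thesis by simp
qed

lemma abs_le_gamma_norm:
  assumes "bdd_above (range (\<lambda>n. \<bar>(fact n)^2 * p n / (real \<gamma> * \<bar>C\<bar> * \<Delta>) ^ n\<bar>))"
    and "bdd_above (range (\<lambda>n. \<bar>(fact n)^2 * q n / (real \<gamma> * \<bar>C\<bar> * \<Delta>) ^ n\<bar>))"
    and "0 < real \<gamma> * \<bar>C\<bar> * \<Delta>"
  shows "\<bar>p n\<bar> \<le> gamma_norm p q \<gamma> C \<Delta> * (real \<gamma> * \<bar>C\<bar> * \<Delta>) ^ n / (fact n)^2"
    and "\<bar>q n\<bar> \<le> gamma_norm p q \<gamma> C \<Delta> * (real \<gamma> * \<bar>C\<bar> * \<Delta>) ^ n / (fact n)^2"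
  using assms by (auto intro!: abs_le_of_weighted_SUP_le simp: gamma_norm_def)

theorem mainTheorem5:
  fixes a b c d C :: real and N \<gamma> :: nat
    and p q :: "nat \<Rightarrow> real" and k :: "real \<Rightarrow> real \<Rightarrow> real"
  defines "\<Delta> \<equiv> max (b - a) (d - c)"
  assumes "a < b" and "c < d" and "C \<noteq> 0" and "N \<ge> 2" and "\<gamma> \<ge> 1"
    and "p 0 = q 0"
    and "bdd_above (range (\<lambda>n. \<bar>(fact n) ^ 2 * p n / (real \<gamma> * \<bar>C\<bar> * \<Delta>) ^ n\<bar>))"
    and "bdd_above (range (\<lambda>n. \<bar>(fact n) ^ 2 * q n / (real \<gamma> * \<bar>C\<bar> * \<Delta>) ^ n\<bar>))"
    and "goursat_solution a b c d C k"
    and "\<forall>s\<in>{a..b}. k s c = (\<Sum>n. p n * (s - a) ^ n)"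
    and "\<forall>t\<in>{c..d}. k a t = (\<Sum>n. q n * (t - c) ^ n)"
  shows "\<bar>k b d - k_hat p q C a b c d N\<bar>
    \<le> 2 * gamma_norm p q \<gamma> C \<Delta>
        * bessel_I0 (2 * sqrt (real \<gamma> * \<bar>C\<bar>) * \<Delta>)
        * bessel_I0 (2 * sqrt ((real \<gamma> + 1) * \<bar>C\<bar>) * \<Delta>)
        * (\<bar>C\<bar> * \<Delta>^2) ^ (N + 1) * (real \<gamma> + 1) ^ (N + 1) / (fact (N + 1)) ^ 2"
proof -
  define M where "M = gamma_norm p q \<gamma> C \<Delta>"
  define E where "E = 2 * M * bessel_I0 (2 * sqrt ((real \<gamma> + 1) * \<bar>C\<bar>) * \<Delta>)
    * (\<bar>C\<bar> * \<Delta>^2) ^ (N + 1) * (real \<gamma> + 1) ^ (N + 1) / (fact (N + 1))^2"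
  have \<Delta>: "b - a \<le> \<Delta>" "d - c \<le> \<Delta>" "0 < real \<gamma> * \<bar>C\<bar> * \<Delta>"
    using assms(2-6) by (auto simp: \<Delta>_def)
  interpret goursat_coeff_bounds p q C M "real \<gamma>" \<Delta>
    using abs_le_gamma_norm[OF assms(8,9) \<Delta>(3)] by unfold_locales (simp_all add: M_def)
  have k_eq: "k b d = goursat_series p q C (b - a) (d - c)"
    using assms(2,3,10-12) \<Delta> by (intro goursat_solution_eq_goursat_series) auto
  have "\<bar>k b d - k_hat p q C a b c d N\<bar> \<le> E"
    unfolding k_eq E_def using assms(2,3,7) \<Delta> by (intro abs_goursat_series_minus_k_hat_le) auto
  \<comment> \<open>The first Bessel factor is at least 1 and not needed here, nor is \<open>N \<ge> 2\<close>.\<close>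
  also have "E \<le> bessel_I0 (2 * sqrt (real \<gamma> * \<bar>C\<bar>) * \<Delta>) * E"
  proof -
    have "0 \<le> bessel_I0 (2 * sqrt ((real \<gamma> + 1) * \<bar>C\<bar>) * \<Delta>)"
      using one_le_bessel_I0[of "(real \<gamma> + 1) * \<bar>C\<bar>" \<Delta>] by simp
    then have "0 \<le> E"
      unfolding E_def using M_nonneg by (intro divide_nonneg_nonneg mult_nonneg_nonneg) auto
    then show ?thesis
      using mult_right_mono[OF one_le_bessel_I0[of "real \<gamma> * \<bar>C\<bar>" \<Delta>]] by simp
  qed
  finally show ?thesis
    by (simp add: E_def M_def mult_ac)
qed

end
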